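(* Consider an instance of \textbf{LTSP} in which there is $k\in\mathbb N$ such that $s(f)=k$ and $n(f)\le 1$ for every file $f\in\mathcal F$. Then $\mathcal B_1=\{(f,f): f\in\mathcal F\setminus\{f_1\},\ n(f)=1\}$ is optimal, i.e., $v(\mathcal B_1)\le v(\mathcal B_1')$ for every set $\mathcal B_1'$ of mini-batches not containing the leftmost file $f_1$.
   Context: A single-track tape stores a sequence of files $\mathcal F=(f_1,\dots,f_n)$ laid out contiguously from left to right: file $f$ occupies blocks $l(f),\dots,r(f)$, has size $s(f)=r(f)-l(f)+1$, $l(f_1)=1$, $l(f_{i+1})=r(f_i)+1$, and $m=\sum_f s(f)$. The tape moves one block per time step; at time $0$ the head is at position $m$. A file is read when the head traverses it rightwards from $l(f)$ to $r(f)$. $\mathcal R$ is a finite set of requests, all released at time $0$, each associated with a file $f(r)$; $\mathcal R(f)$ is the set of requests for $f$ and $n(f)=|\mathcal R(f)|$. A request's response time is the time at which the head starts a rightward reading traversal of its file (all pending requests of a file are serviced simultaneously). \textbf{LTSP} asks to minimize the sum of response times. A mini-batch is a pair $b=(f,f')$ of files with $l(f)\le l(f')$; $l(b)=l(f)$, $r(b)=r(f')$, $s(b)=r(b)-l(b)+1$, and $\mathcal F(b)$ is the set of files $g$ with $l(b)\le l(g)$ and $r(g)\le r(b)$; it is atomic if $|\mathcal F(b)|=1$. Given a set $\mathcal B_1$ of mini-batches, the associated schedule is: Phase 1, the head moves leftwards from $m$ to position $1$, and whenever it reaches $l(b)$ for some $b\in\mathcal B_1$ it executes $b$ (moves rightwards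 from $l(b)$ to $r(b)$, reading every file of $\mathcal F(b)$, then returns to $l(b)$) before continuing leftwards; Phase 2, the head moves rightwards from position $1$ to $m$, reading every file. $v(\mathcal B_1)$ denotes the total response time of this schedule. Convention of the paper: the leftmost file of the tape starts Phase 2 and never belongs to a mini-batch of Phase 1. *)

theory Defs
  imports Main
begin

text \<open>Files are indexed 1..n; s i is the size of file i, req i = n(f_i) the number
 of requests for file i. Tape blocks are numbered 1..m.\<close>

definition lpos :: "(nat \<Rightarrow> nat) \<Rightarrow> nat \<Rightarrow> nat" where
  "lpos s i = 1 + (\<Sum>j\<in>{1..<i}. s j)"

definition rpos :: "(nat \<Rightarrow> nat) \<Rightarrow> nat \<Rightarrow> nat" where
  "rpos s i = lpos s i + s i - 1"

definition mtot :: "(nat \<Rightarrow> nat) \<Rightarrow> nat \<Rightarrow> nat" where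
  "mtot s n = (\<Sum>j\<in>{1..n}. s j)"

text \<open>A mini-batch is a pair (i, j) of file indices with l(f_i) <= l(f_j).
 Admissible Phase-1 sets: finite, files in range, not containing the leftmost file f_1.\<close>
definition valid_batches :: "(nat \<Rightarrow> nat) \<Rightarrow> nat \<Rightarrow> (nat \<times> nat) set \<Rightarrow> bool" where
  "valid_batches s n B \<longleftrightarrow> finite B \<and>
     (\<forall>(i, j)\<in>B. 2 \<le> i \<and> j \<le> n \<and> lpos s i \<le> lpos s j)"

definition in_batch :: "(nat \<Rightarrow> nat) \<Rightarrow> nat \<times> nat \<Rightarrow> nat \<Rightarrow> bool" where
  "in_batch s b g \<longleftrightarrow> lpos s (fst b) \<le> lpos s g \<and> rpos s g \<le> rpos s (snd b)"

text \<open>Time at which the head, moving leftwards in Phase 1, arrives at position p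
 (before executing the batches starting at p): distance travelled plus the
 round trips 2 (r(b) - l(b)) of all batches executed before.\<close>
definition arrive :: "(nat \<Rightarrow> nat) \<Rightarrow> nat \<Rightarrow> (nat \<times> nat) set \<Rightarrow> nat \<Rightarrow> nat" where
  "arrive s n B p = (mtot s n - p) +
     (\<Sum>b\<in>{b\<in>B. p < lpos s (fst b)}. 2 * (rpos s (snd b) - lpos s (fst b)))"

text \<open>Response time of file g: start of its first rightward reading traversal.
 If some batch covers g, the first one executed starts at the largest left endpoint
 among covering batches (batches sharing a left endpoint are executed longest
 first); otherwise g is read in Phase 2, which starts at time arrive 1.\<close>
definition resp :: "(nat \<Rightarrow> nat) \<Rightarrow> nat \<Rightarrow> (nat \<times> nat) set \<Rightarrow> nat \<Rightarrow> nat" where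
  "resp s n B g =
     (if \<exists>b\<in>B. in_batch s b g
      then (let p = Max {lpos s (fst b) | b. b \<in> B \<and> in_batch s b g}
            in arrive s n B p + (lpos s g - p))
      else arrive s n B 1 + (lpos s g - 1))"

definition vB :: "(nat \<Rightarrow> nat) \<Rightarrow> (nat \<Rightarrow> nat) \<Rightarrow> nat \<Rightarrow> (nat \<times> nat) set \<Rightarrow> nat" where
  "vB s req n B = (\<Sum>g\<in>{1..n}. req g * resp s n B g)"

end

theory Submission
  imports Defs
begin

text \<open>With uniform file size k, a file g is read at time (m - l(g)) + 2 (l(g) - p) + D(p),
  where p is the position from which the traversal first reading g starts and D(p) is the
  time spent on the mini-batches executed to the right of p. For the singleton batches of
  the requested files p = l(g), and D(p) is 2 (k - 1) per requested file to the right of g.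
  For an arbitrary admissible B', a batch containing d files costs 2 (d k - 1) \<ge> 2 d (k - 1),
  so every requested h with p(h) > p(g) costs g at least 2 (k - 1) in D(p(g)); every
  requested h < g with p(h) \<ge> p(g) starts in [p(g), l(g)) and costs g 2 k in the
  back-and-forth over that interval. Charging each pair g < h of requested files to g if
  p(g) < p(h) and to h otherwise shows that B' pays at least 2 (k - 1) per pair, which is
  exactly what the singleton batches pay.\<close>

definition read_start :: "(nat \<Rightarrow> nat) \<Rightarrow> (nat \<times> nat) set \<Rightarrow> nat \<Rightarrow> nat" where
  "read_start s B g =
     (if \<exists>b\<in>B. in_batch s b g then Max {lpos s (fst b) | b. b \<in> B \<and> in_batch s b g} else 1)"

definition detour_time :: "(nat \<Rightarrow> nat) \<Rightarrow> (nat \<times> nat) set \<Rightarrow> nat \<Rightarrow> nat" where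
  "detour_time s B p = (\<Sum>b\<in>{b\<in>B. p < lpos s (fst b)}. 2 * (rpos s (snd b) - lpos s (fst b)))"

definition singleton_batches :: "nat set \<Rightarrow> (nat \<times> nat) set" where
  "singleton_batches R = (\<lambda>i. (i, i)) ` (R - {1})"

lemma lpos_ge_1: "1 \<le> lpos s i"
  by (simp add: lpos_def)

lemma lpos_mono: "i \<le> j \<Longrightarrow> lpos s i \<le> lpos s j"
  by (simp add: lpos_def sum_mono2)

lemma finite_covering_starts:
  assumes "finite B"
  shows "finite {lpos s (fst b) | b. b \<in> B \<and> in_batch s b g}"
proof -
  have "{lpos s (fst b) | b. b \<in> B \<and> in_batch s b g} = (\<lambda>b. lpos s (fst b)) ` {b\<in>B. in_batch s b g}"
    by blast
  then show ?thesis
    using assms by simp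
qed

lemma read_start_bounds:
  assumes "finite B"
  shows "1 \<le> read_start s B g \<and> read_start s B g \<le> lpos s g"
proof (cases "\<exists>b\<in>B. in_batch s b g")
  case True
  let ?S = "{lpos s (fst b) | b. b \<in> B \<and> in_batch s b g}"
  have "finite ?S" "?S \<noteq> {}"
    using finite_covering_starts[OF assms] True by auto
  moreover have "\<forall>p\<in>?S. 1 \<le> p \<and> p \<le> lpos s g"
    using lpos_ge_1 by (auto simp: in_batch_def)
  ultimately show ?thesis
    using True by (simp add: read_start_def Max_ge_iff)
next
  case False
  then show ?thesis
    using lpos_ge_1[of s g] by (simp add: read_start_def)
qed

lemma read_start_attained:
  assumes "finite B" and "1 < read_start s B g"
  shows "\<exists>b\<in>B. lpos s (fst b) = read_start s B g \<and> in_batch s b g"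
proof -
  let ?S = "{lpos s (fst b) | b. b \<in> B \<and> in_batch s b g}"
  have covered: "\<exists>b\<in>B. in_batch s b g"
    using assms(2) by (auto simp: read_start_def split: if_splits)
  then have "Max ?S \<in> ?S"
    using finite_covering_starts[OF assms(1)] by (intro Max_in) auto
  then obtain b where "b \<in> B" "in_batch s b g" "lpos s (fst b) = Max ?S"
    by auto
  with covered show ?thesis
    by (auto simp: read_start_def)
qed

lemma arrive_eq_detour_time: "arrive s n B p = (mtot s n - p) + detour_time s B p"
  by (simp add: arrive_def detour_time_def)

lemma resp_eq_read_start:
  assumes "finite B" and "lpos s g \<le> mtot s n"
  shows "resp s n B g = (mtot s n - lpos s g) + 2 * (lpos s g - read_start s B g)
                        + detour_time s B (read_start s B g)"
proof -
  have "resp s n B g = arrive s n B (read_start s B g) + (lpos s g - read_start s B g)"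
    by (simp add: resp_def read_start_def Let_def)
  then show ?thesis
    using read_start_bounds[OF assms(1), of s g] assms(2)
    unfolding arrive_eq_detour_time by linarith
qed

lemma vB_eq_sum_requested:
  assumes "\<forall>i\<in>{1..n}. req i \<le> (1::nat)"
  shows "vB s req n B = (\<Sum>g\<in>{g\<in>{1..n}. req g = 1}. resp s n B g)"
proof -
  have "vB s req n B = (\<Sum>g\<in>{1..n}. if req g = 1 then resp s n B g else 0)"
    unfolding vB_def using assms by (intro sum.cong) (auto simp: le_Suc_eq)
  also have "\<dots> = (\<Sum>g\<in>{g\<in>{1..n}. req g = 1}. resp s n B g)"
    by (rule sum.inter_filter[symmetric]) simp
  finally show ?thesis .
qed

lemma sum_card_filter_swap:
  assumes "finite R"
  shows "(\<Sum>g\<in>R. card {h\<in>R. Q g h}) = (\<Sum>h\<in>R. card {g\<in>R. Q g h})"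
  using sum.swap_restrict[OF assms assms, of "\<lambda>_ _. 1::nat" Q] by simp

lemma sum_card_greater_le:
  fixes R :: "'a::linorder set" and P :: "'a \<Rightarrow> 'b::linorder"
  assumes "finite R"
  shows "(\<Sum>g\<in>R. card {h\<in>R. g < h})
         \<le> (\<Sum>g\<in>R. card {h\<in>R. P g < P h} + card {h\<in>R. h < g \<and> P g \<le> P h})"
proof -
  have "card {h\<in>R. g < h} \<le> card {h\<in>R. P g < P h} + card {h\<in>R. g < h \<and> P h \<le> P g}" for g
  proof -
    have "{h\<in>R. g < h} \<subseteq> {h\<in>R. P g < P h} \<union> {h\<in>R. g < h \<and> P h \<le> P g}"
      by auto
    then have "card {h\<in>R. g < h} \<le> card ({h\<in>R. P g < P h} \<union> {h\<in>R. g < h \<and> P h \<le> P g})"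
      using assms by (intro card_mono) auto
    then show ?thesis
      using card_Un_le le_trans by blast
  qed
  then have "(\<Sum>g\<in>R. card {h\<in>R. g < h})
      \<le> (\<Sum>g\<in>R. card {h\<in>R. P g < P h}) + (\<Sum>g\<in>R. card {h\<in>R. g < h \<and> P h \<le> P g})"
    by (simp add: sum.distrib[symmetric] sum_mono)
  also have "(\<Sum>g\<in>R. card {h\<in>R. g < h \<and> P h \<le> P g}) = (\<Sum>h\<in>R. card {g\<in>R. g < h \<and> P h \<le> P g})"
    using sum_card_filter_swap[OF assms] .
  finally show ?thesis
    by (simp add: sum.distrib)
qed

locale uniform_tape =
  fixes n k :: nat and s :: "nat \<Rightarrow> nat"
  assumes n_pos: "1 \<le> n" and k_pos: "1 \<le> k" and size_uniform: "\<forall>i\<in>{1..n}. s i = k"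
begin

lemma lpos_uniform: "i \<le> Suc n \<Longrightarrow> lpos s i = 1 + (i - 1) * k"
  using size_uniform by (simp add: lpos_def)

lemma rpos_uniform: "1 \<le> i \<Longrightarrow> i \<le> n \<Longrightarrow> rpos s i = i * k"
  using size_uniform by (cases i) (auto simp: rpos_def lpos_uniform)

lemma mtot_uniform: "mtot s n = n * k"
  using size_uniform by (simp add: mtot_def)

lemma lpos_le_mtot:
  assumes "1 \<le> g" and "g \<le> n"
  shows "lpos s g \<le> mtot s n"
proof -
  have "lpos s g \<le> g * k"
    using assms k_pos by (cases g) (auto simp: lpos_uniform)
  also have "\<dots> \<le> mtot s n"
    using assms by (simp add: mtot_uniform)
  finally show ?thesis .
qed

lemma lpos_le_lpos_iff:
  "1 \<le> i \<Longrightarrow> 1 \<le> j \<Longrightarrow> i \<le> Suc n \<Longrightarrow> j \<le> Suc n \<Longrightarrow> lpos s i \<le> lpos s j \<longleftrightarrow> i \<le> j"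
  using k_pos by (auto simp: lpos_uniform)

lemma valid_batch_indices:
  assumes "valid_batches s n B" and "b \<in> B"
  shows "2 \<le> fst b \<and> fst b \<le> snd b \<and> snd b \<le> n"
proof -
  obtain i j where b: "b = (i, j)"
    by force
  have ij: "2 \<le> i" "j \<le> n" "lpos s i \<le> lpos s j"
    using assms b by (auto simp: valid_batches_def)
  have "i \<le> j"
  proof (rule ccontr)
    assume "\<not> i \<le> j"
    define i' where "i' = min i (Suc n)"
    have "j - 1 < i' - 1" "i' \<le> Suc n"
      using ij n_pos \<open>\<not> i \<le> j\<close> by (auto simp: i'_def)
    then have "lpos s j < lpos s i'"
      using k_pos ij by (simp add: lpos_uniform)
    also have "\<dots> \<le> lpos s i"
      by (simp add: i'_def lpos_mono)
    finally show False
      using ij by simp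
  qed
  with ij b show ?thesis
    by simp
qed

lemma in_batch_iff:
  assumes "valid_batches s n B" and "b \<in> B" and "1 \<le> g" and "g \<le> n"
  shows "in_batch s b g \<longleftrightarrow> fst b \<le> g \<and> g \<le> snd b"
proof -
  have b: "2 \<le> fst b" "fst b \<le> snd b" "snd b \<le> n"
    using valid_batch_indices[OF assms(1,2)] by auto
  then have "lpos s (fst b) \<le> lpos s g \<longleftrightarrow> fst b \<le> g"
    using assms(3,4) by (intro lpos_le_lpos_iff) auto
  moreover have "rpos s g \<le> rpos s (snd b) \<longleftrightarrow> g \<le> snd b"
    using b assms(3,4) k_pos by (simp add: rpos_uniform)
  ultimately show ?thesis
    by (simp add: in_batch_def)
qed

lemma batch_span:
  assumes "1 \<le> i" and "i \<le> j" and "j \<le> n"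
  shows "rpos s j - lpos s i = (Suc j - i) * k - 1"
proof -
  have "j * k = (i - 1) * k + (Suc j - i) * k"
    using assms by (simp add: add_mult_distrib[symmetric])
  then show ?thesis
    using assms by (simp add: rpos_uniform lpos_uniform)
qed

lemma card_in_batch_le_detour:
  assumes "valid_batches s n B" and "b \<in> B"
  shows "(k - 1) * card {h\<in>{1..n}. in_batch s b h} \<le> rpos s (snd b) - lpos s (fst b)"
proof -
  have b: "2 \<le> fst b" "fst b \<le> snd b" "snd b \<le> n"
    using valid_batch_indices[OF assms] by auto
  have "{h\<in>{1..n}. in_batch s b h} \<subseteq> {fst b..snd b}"
    using in_batch_iff[OF assms] by auto
  then have "card {h\<in>{1..n}. in_batch s b h} \<le> Suc (snd b) - fst b"
    using card_mono[of "{fst b..snd b}"] by fastforce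
  then have "(k - 1) * card {h\<in>{1..n}. in_batch s b h} \<le> (k - 1) * (Suc (snd b) - fst b)"
    by simp
  also have "\<dots> \<le> (Suc (snd b) - fst b) * k - 1"
    using b k_pos by (simp add: diff_mult_distrib2 mult.commute)
  also have "\<dots> = rpos s (snd b) - lpos s (fst b)"
    using b by (simp add: batch_span)
  finally show ?thesis .
qed

lemma detour_time_ge_card_covered:
  assumes "valid_batches s n B"
  shows "2 * (k - 1) * card {h\<in>{1..n}. \<exists>b\<in>B. p < lpos s (fst b) \<and> in_batch s b h}
         \<le> detour_time s B p"
proof -
  let ?Bp = "{b\<in>B. p < lpos s (fst b)}"
  have "finite ?Bp"
    using assms by (simp add: valid_batches_def)
  have "{h\<in>{1..n}. \<exists>b\<in>B. p < lpos s (fst b) \<and> in_batch s b h}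
        = (\<Union>b\<in>?Bp. {h\<in>{1..n}. in_batch s b h})"
    by auto
  then have "card {h\<in>{1..n}. \<exists>b\<in>B. p < lpos s (fst b) \<and> in_batch s b h}
             \<le> (\<Sum>b\<in>?Bp. card {h\<in>{1..n}. in_batch s b h})"
    using card_UN_le[OF \<open>finite ?Bp\<close>] by simp
  then have "2 * (k - 1) * card {h\<in>{1..n}. \<exists>b\<in>B. p < lpos s (fst b) \<and> in_batch s b h}
             \<le> 2 * (k - 1) * (\<Sum>b\<in>?Bp. card {h\<in>{1..n}. in_batch s b h})"
    by (rule mult_le_mono2)
  also have "\<dots> = (\<Sum>b\<in>?Bp. 2 * ((k - 1) * card {h\<in>{1..n}. in_batch s b h}))"
    by (simp add: sum_distrib_left mult.assoc)
  also have "\<dots> \<le> detour_time s B p"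
    unfolding detour_time_def
    using card_in_batch_le_detour[OF assms] by (intro sum_mono) auto
  finally show ?thesis .
qed

lemma card_starts_in_interval_le:
  assumes "1 \<le> h" and "h \<le> n" and "1 \<le> p"
  shows "k * card {g\<in>{1..n}. g < h \<and> p \<le> lpos s g} \<le> lpos s h - p"
proof -
  let ?S = "{g\<in>{1..n}. g < h \<and> p \<le> lpos s g}"
  show ?thesis
  proof (cases "?S = {}")
    case True
    then show ?thesis
      by (metis card.empty mult_0_right zero_le)
  next
    case False
    define g0 where "g0 = Min ?S"
    have "g0 \<in> ?S"
      using Min_in[OF _ False] by (simp add: g0_def)
    have "?S \<subseteq> {g0..<h}"
      using Min_le[of ?S] by (auto simp: g0_def)
    then have "card ?S \<le> h - g0"
      using card_mono[of "{g0..<h}"] by fastforce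
    then have "k * card ?S \<le> (h - 1) * k - (g0 - 1) * k"
      using \<open>g0 \<in> ?S\<close> by (simp add: diff_mult_distrib[symmetric])
    also have "\<dots> = lpos s h - lpos s g0"
      using \<open>g0 \<in> ?S\<close> assms by (simp add: lpos_uniform)
    also have "\<dots> \<le> lpos s h - p"
      using \<open>g0 \<in> ?S\<close> by (intro diff_le_mono2) simp
    finally show ?thesis .
  qed
qed

lemma resp_uniform:
  assumes "finite B" and "1 \<le> g" and "g \<le> n"
  shows "resp s n B g = (n * k - lpos s g) + 2 * (lpos s g - read_start s B g)
                        + detour_time s B (read_start s B g)"
  using resp_eq_read_start[OF assms(1) lpos_le_mtot[OF assms(2,3)]] by (simp add: mtot_uniform)

lemma valid_singleton_batches: "R \<subseteq> {1..n} \<Longrightarrow> valid_batches s n (singleton_batches R)"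
  by (auto simp: valid_batches_def singleton_batches_def finite_subset)

lemma read_start_singleton_batches:
  assumes "R \<subseteq> {1..n}" and "g \<in> R"
  shows "read_start s (singleton_batches R) g = lpos s g"
proof -
  have g: "1 \<le> g" "g \<le> n"
    using assms by auto
  have covering: "b \<in> singleton_batches R \<and> in_batch s b g \<longleftrightarrow> b = (g, g) \<and> g \<noteq> 1" for b
    using in_batch_iff[OF valid_singleton_batches[OF assms(1)] _ g] assms(2)
    by (auto simp: singleton_batches_def)
  show ?thesis
  proof (cases "g = 1")
    case True
    then show ?thesis
      using covering by (simp add: read_start_def lpos_def)
  next
    case False
    then have "{lpos s (fst b) | b. b \<in> singleton_batches R \<and> in_batch s b g} = {lpos s g}"
      using covering by auto
    with False show ?thesis
      using covering by (auto simp: read_start_def)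
  qed
qed

lemma detour_time_singleton_batches:
  assumes "R \<subseteq> {1..n}" and "g \<in> R"
  shows "detour_time s (singleton_batches R) (lpos s g) = 2 * (k - 1) * card {h\<in>R. g < h}"
proof -
  have "lpos s g < lpos s h \<longleftrightarrow> g < h" if "h \<in> R" for h
  proof -
    have "1 \<le> g" "g \<le> n" "1 \<le> h" "h \<le> n"
      using assms that by auto
    then show ?thesis
      using lpos_le_lpos_iff[of h g] by (simp add: not_le[symmetric])
  qed
  then have later: "{b\<in>singleton_batches R. lpos s g < lpos s (fst b)} = (\<lambda>i. (i, i)) ` {h\<in>R. g < h}"
    using assms by (force simp: singleton_batches_def)
  have "rpos s h - lpos s h = k - 1" if "h \<in> R" for h
    using subsetD[OF assms(1) that] batch_span[of h h] by simp
  then have "detour_time s (singleton_batches R) (lpos s g) = (\<Sum>h\<in>{h\<in>R. g < h}. 2 * (k - 1))"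
    unfolding detour_time_def later by (simp add: sum.reindex inj_on_def)
  then show ?thesis
    by simp
qed

lemma resp_singleton_batches:
  assumes "R \<subseteq> {1..n}" and "g \<in> R"
  shows "resp s n (singleton_batches R) g = (n * k - lpos s g) + 2 * (k - 1) * card {h\<in>R. g < h}"
  using resp_uniform[of "singleton_batches R" g] valid_singleton_batches[OF assms(1)] assms
  by (auto simp: valid_batches_def read_start_singleton_batches detour_time_singleton_batches)

lemma detour_time_ge_card_later_starts:
  assumes "valid_batches s n B" and "R \<subseteq> {1..n}" and "1 \<le> p"
  shows "2 * (k - 1) * card {h\<in>R. p < read_start s B h} \<le> detour_time s B p"
proof -
  have fin: "finite B"
    using assms(1) by (simp add: valid_batches_def)
  have "{h\<in>R. p < read_start s B h} \<subseteq> {h\<in>{1..n}. \<exists>b\<in>B. p < lpos s (fst b) \<and> in_batch s b h}"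
  proof
    fix h
    assume h: "h \<in> {h\<in>R. p < read_start s B h}"
    then have "1 < read_start s B h"
      using assms(3) by simp
    then obtain b where "b \<in> B" "lpos s (fst b) = read_start s B h" "in_batch s b h"
      using read_start_attained[OF fin] by blast
    with h assms(2) show "h \<in> {h\<in>{1..n}. \<exists>b\<in>B. p < lpos s (fst b) \<and> in_batch s b h}"
      by (auto intro!: bexI[of _ b])
  qed
  then have "card {h\<in>R. p < read_start s B h}
             \<le> card {h\<in>{1..n}. \<exists>b\<in>B. p < lpos s (fst b) \<and> in_batch s b h}"
    by (intro card_mono) auto
  then show ?thesis
    using detour_time_ge_card_covered[OF assms(1), of p] mult_le_mono2 le_trans by blast
qed

text \<open>The files counted start in [p, l(g)) with p = read_start s B g.\<close>
lemma backtrack_ge_card_earlier_starts: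
  assumes "valid_batches s n B" and "R \<subseteq> {1..n}" and "g \<in> R"
  shows "(k - 1) * card {h\<in>R. h < g \<and> read_start s B g \<le> read_start s B h}
         \<le> lpos s g - read_start s B g"
proof -
  have fin: "finite B"
    using assms(1) by (simp add: valid_batches_def)
  have "read_start s B h \<le> lpos s h" for h
    using read_start_bounds[OF fin] by blast
  then have "{h\<in>R. h < g \<and> read_start s B g \<le> read_start s B h}
             \<subseteq> {h\<in>{1..n}. h < g \<and> read_start s B g \<le> lpos s h}"
    using assms(2) by (auto intro: le_trans)
  then have "card {h\<in>R. h < g \<and> read_start s B g \<le> read_start s B h}
             \<le> card {h\<in>{1..n}. h < g \<and> read_start s B g \<le> lpos s h}"
    by (intro card_mono) auto
  then have "(k - 1) * card {h\<in>R. h < g \<and> read_start s B g \<le> read_start s B h}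
             \<le> k * card {h\<in>{1..n}. h < g \<and> read_start s B g \<le> lpos s h}"
    using mult_le_mono[OF diff_le_self[of k 1]] by simp
  also have "\<dots> \<le> lpos s g - read_start s B g"
    using card_starts_in_interval_le[of g "read_start s B g"] read_start_bounds[OF fin, of s g] assms(2,3) by auto
  finally show ?thesis .
qed

lemma resp_ge_charges:
  assumes "valid_batches s n B" and "R \<subseteq> {1..n}" and "g \<in> R"
  shows "(n * k - lpos s g) + 2 * (k - 1) * (card {h\<in>R. read_start s B g < read_start s B h}
           + card {h\<in>R. h < g \<and> read_start s B g \<le> read_start s B h})
         \<le> resp s n B g"
proof -
  have fin: "finite B"
    using assms(1) by (simp add: valid_batches_def)
  have "2 * (k - 1) * card {h\<in>R. read_start s B g < read_start s B h}
        \<le> detour_time s B (read_start s B g)"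
    using detour_time_ge_card_later_starts[OF assms(1,2)] read_start_bounds[OF fin] by blast
  moreover have "2 * (k - 1) * card {h\<in>R. h < g \<and> read_start s B g \<le> read_start s B h}
        \<le> 2 * (lpos s g - read_start s B g)"
    using backtrack_ge_card_earlier_starts[OF assms] by simp
  moreover have "resp s n B g = (n * k - lpos s g) + 2 * (lpos s g - read_start s B g)
                                 + detour_time s B (read_start s B g)"
    using resp_uniform[OF fin] assms(2,3) by auto
  ultimately show ?thesis
    by (simp add: add_mult_distrib2)
qed

end

theorem theorem2:
  fixes n k :: nat and s req :: "nat \<Rightarrow> nat" and B' :: "(nat \<times> nat) set"
  assumes "1 \<le> n" and "1 \<le> k"
    and "\<forall>i\<in>{1..n}. s i = k"
    and "\<forall>i\<in>{1..n}. req i \<le> 1"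
    and "valid_batches s n B'"
  shows "vB s req n {(i, i) | i. i \<in> {2..n} \<and> req i = 1} \<le> vB s req n B'"
proof -
  interpret uniform_tape n k s
    using assms(1-3) by unfold_locales
  define R where "R = {g\<in>{1..n}. req g = 1}"
  define P where "P = read_start s B'"
  have R: "R \<subseteq> {1..n}" "finite R"
    by (auto simp: R_def)
  have "{(i, i) | i. i \<in> {2..n} \<and> req i = 1} = singleton_batches R"
    by (auto simp: R_def singleton_batches_def)
  then have "vB s req n {(i, i) | i. i \<in> {2..n} \<and> req i = 1}
             = (\<Sum>g\<in>R. (n * k - lpos s g) + 2 * (k - 1) * card {h\<in>R. g < h})"
    using vB_eq_sum_requested[OF assms(4)] resp_singleton_batches[OF R(1)]
    by (simp add: R_def)
  also have "\<dots> \<le> (\<Sum>g\<in>R. (n * k - lpos s g)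
                 + 2 * (k - 1) * (card {h\<in>R. P g < P h} + card {h\<in>R. h < g \<and> P g \<le> P h}))"
    using sum_card_greater_le[OF R(2), of P]
    by (simp add: sum.distrib sum_distrib_left[symmetric])
  also have "\<dots> \<le> (\<Sum>g\<in>R. resp s n B' g)"
    using resp_ge_charges[OF assms(5) R(1)] by (intro sum_mono) (simp add: P_def)
  also have "\<dots> = vB s req n B'"
    using vB_eq_sum_requested[OF assms(4)] by (simp add: R_def)
  finally show ?thesis .
qed

end
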